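(* For a monopoly SP, the optimal revenue-maximizing and social welfare-maximizing bandwidth allocation strategies are the same and are determined by the following cases: 1. If $B_S^0\le \frac{N_f\lambda_S^{1/\alpha-1}B}{N_f\lambda_S^{1/\alpha-1}+N_m}$, the optimal bandwidth allocation remains the same as that without the regulatory constraint, namely $B_S^{\text{SW}}=B_S^{\text{rev}}=\frac{N_f\lambda_S^{1/\alpha-1}B}{N_f\lambda_S^{1/\alpha-1}+N_m}$ and $B_M^{\text{SW}}=B_M^{\text{rev}}=\frac{N_m B}{N_f\lambda_S^{1/\alpha-1}+N_m}$. 2. If $B_S^0> \frac{N_f\lambda_S^{1/\alpha-1}B}{N_f\lambda_S^{1/\alpha-1}+N_m}$, the optimal bandwidth allocation is $B_S^{\text{SW}}=B_S^{\text{rev}}=B_S^0$, $B_M^{\text{SW}}=B_M^{\text{rev}}=B-B_S^0$, and consequently there is both a welfare and a revenue loss (relative to the unconstrained case). In both cases the optimal macro- and small-cell service prices are market-clearing prices, i.e., prices that equalize total rate demand and total rate supply in both cells.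
   Context: A single service provider (SP) has total licensed bandwidth $B$, which it splits into macro-cell bandwidth $B_M$ and small-cell bandwidth $B_S$ subject to $B_M+B_S\le B$, $B_M\ge 0$, and the regulatory constraint $B_S\ge B_S^0$ (a required minimum small-cell bandwidth). Macro-cells provide total rate $C_M=B_M R_0$ and small-cells provide total rate $C_S=\lambda_S B_S R_0$, where $R_0$ is the macro-cell spectral efficiency and $\lambda_S>1$. There are mobile users of density $N_m$, who can only associate with macro-cells (and have priority there), and fixed users of density $N_f$, who can associate with either macro- or small-cells (but not both). Every user has utility $u(r)=r^{1-\alpha}/(1-\alpha)$ with $\alpha\in(0,1)$, and given a price $p$ per unit rate chooses rate $D(p)=(1/p)^{1/\alpha}$. The SP charges prices $p_M,p_S\in(0,\infty)$ per unit rate for macro- and small-cell service; users pick the cheapest service and fill its capacity (splitting proportionally to capacities under ties, with leftover demand spilling over). With $K_M,K_S$ the masses of users associated with macro- and small-cells, the SP's revenue is $p_M K_M D(p_M)+p_S K_S D(p_S)$ and social welfare is $K_M u(D(p_M))+K_S u(D(p_S))$. The SP first chooses the bandwidth split, then prices. $B_S^{\text{SW}},B_M^{\text{SW}}$ denote the welfare-maximizing allocation and $B_S^{\text{rev}},B_M^{\text{rev}}$ the revenue-maximizing allocation. *)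

theory Defs
  imports Complex_Main
begin

text \<open>Model of a monopoly service provider with macro- and small-cells.
  Parameters: al (alpha), R0 (macro spectral efficiency), lS (lambda_S),
  Nm (mobile user density), Nf (fixed user density).\<close>

definition demand :: "real \<Rightarrow> real \<Rightarrow> real" where
  "demand al p = (1 / p) powr (1 / al)"

definition util :: "real \<Rightarrow> real \<Rightarrow> real" where
  "util al r = r powr (1 - al) / (1 - al)"

text \<open>User association: returns (K_M, K_S), the masses of users associated with
  macro- and small-cells, given bandwidths (BM, BS) and prices (pM, pS).
  Capacities are measured in users: capacity rate divided by per-user demand.
  Mobile users are served first in macro-cells (priority); fixed users choose the
  cheaper service, fill it, and the leftover spills over; under a tie the fixed
  users are split proportionally to the capacities, with spill-over of excess.\<close>

definition assoc :: "real \<Rightarrow> real \<Rightarrow> real \<Rightarrow> real \<Rightarrow> real \<Rightarrow>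
    real \<times> real \<Rightarrow> real \<times> real \<Rightarrow> real \<times> real" where
  "assoc al R0 lS Nm Nf s p =
    (let BM = fst s; BS = snd s; pM = fst p; pS = snd p;
         CM = BM * R0; CS = lS * BS * R0;
         cM = CM / demand al pM; cS = CS / demand al pS;
         mM = min Nm cM; R = cM - mM;
         (fM, fS) =
           (if pS < pM then
              (let fS = min Nf cS in (min (Nf - fS) R, fS))
            else if pM < pS then
              (let fM = min Nf R in (fM, min (Nf - fM) cS))
            else
              (let xS = (if CS + CM = 0 then 0 else Nf * CS / (CS + CM));
                   xM = Nf - xS
               in (min R (xM + max 0 (xS - cS)), min cS (xS + max 0 (xM - R)))))
     in (mM + fM, fS))"

definition revenue :: "real \<Rightarrow> real \<Rightarrow> real \<Rightarrow> real \<Rightarrow> real \<Rightarrow>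
    real \<times> real \<Rightarrow> real \<times> real \<Rightarrow> real" where
  "revenue al R0 lS Nm Nf s p =
    (let K = assoc al R0 lS Nm Nf s p in
       fst p * fst K * demand al (fst p) + snd p * snd K * demand al (snd p))"

definition welfare :: "real \<Rightarrow> real \<Rightarrow> real \<Rightarrow> real \<Rightarrow> real \<Rightarrow>
    real \<times> real \<Rightarrow> real \<times> real \<Rightarrow> real" where
  "welfare al R0 lS Nm Nf s p =
    (let K = assoc al R0 lS Nm Nf s p in
       fst K * util al (demand al (fst p)) + snd K * util al (demand al (snd p)))"

definition feasible :: "real \<Rightarrow> real \<Rightarrow> (real \<times> real) set" where
  "feasible B BS0 = {(BM, BS). BM + BS \<le> B \<and> BM \<ge> 0 \<and> BS \<ge> BS0}"

definition pos_prices :: "(real \<times> real) set" where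
  "pos_prices = {(pM, pS). pM > 0 \<and> pS > 0}"

definition opt_prices :: "(real \<times> real \<Rightarrow> real \<times> real \<Rightarrow> real) \<Rightarrow>
    real \<times> real \<Rightarrow> real \<times> real \<Rightarrow> bool" where
  "opt_prices F s p \<longleftrightarrow> p \<in> pos_prices \<and> (\<forall>q \<in> pos_prices. F s q \<le> F s p)"

definition opt_alloc :: "(real \<times> real \<Rightarrow> real \<times> real \<Rightarrow> real) \<Rightarrow>
    real \<Rightarrow> real \<Rightarrow> real \<times> real \<Rightarrow> bool" where
  "opt_alloc F B BS0 s \<longleftrightarrow> s \<in> feasible B BS0 \<and>
     (\<exists>p \<in> pos_prices. \<forall>s' \<in> feasible B BS0. \<forall>q \<in> pos_prices. F s' q \<le> F s p)"

definition strict_loss :: "(real \<times> real \<Rightarrow> real \<times> real \<Rightarrow> real) \<Rightarrow>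
    real \<Rightarrow> real \<Rightarrow> bool" where
  "strict_loss F B BS0 \<longleftrightarrow>
     (\<exists>s' \<in> feasible B 0. \<exists>q \<in> pos_prices.
        \<forall>s \<in> feasible B BS0. \<forall>p \<in> pos_prices. F s p < F s' q)"

definition market_clearing :: "real \<Rightarrow> real \<Rightarrow> real \<Rightarrow> real \<Rightarrow> real \<Rightarrow>
    real \<times> real \<Rightarrow> real \<times> real \<Rightarrow> bool" where
  "market_clearing al R0 lS Nm Nf s p \<longleftrightarrow>
     Nm * demand al (fst p) = fst s * R0 \<and> Nf * demand al (snd p) = lS * snd s * R0"

end

theory Submission
  imports Defs
begin

text \<open>A user facing price p spends p \<cdot> D(p) = D(p)^(1-\<alpha>), a concave function of the rate whose
  tangent at the rate D(q) has slope q. Let q be the market-clearing prices of the candidate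
  split. Linearising every user's spend at q bounds the revenue of an arbitrary split and prices
  by a convex combination of the clearing revenue of the users actually served and the value of
  the capacities at the prices q; the former is largest when all users are served, the latter at
  the candidate split, because q_M \<ge> \<lambda>_S q_S with equality unless the regulatory minimum binds.
  Equality forces the candidate split and the clearing prices. Welfare is revenue divided by
  1 - \<alpha>, so both objectives have the same maximisers.\<close>

lemma weighted_geometric_mean_less:
  fixes a b w :: real
  assumes "0 < a" "0 < b" "a \<noteq> b" "0 < w" "w < 1"
  shows "a powr w * b powr (1 - w) < w * a + (1 - w) * b"
proof -
  define m where "m = w * a + (1 - w) * b"
  have "0 < m" using assms by (simp add: m_def add_pos_pos)
  have "a - m = (1 - w) * (a - b)" by (simp add: m_def algebra_simps)
  then have "a \<noteq> m" using assms by auto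
  then have "w * (ln a - ln m) < w * ((a - m) / m)"
    using ln_diff_less[OF \<open>0 < a\<close> \<open>0 < m\<close>] assms(4) by (intro mult_strict_left_mono) auto
  moreover have "(1 - w) * (ln b - ln m) \<le> (1 - w) * ((b - m) / m)"
    using ln_diff_le[OF \<open>0 < b\<close> \<open>0 < m\<close>] assms(5) by (intro mult_left_mono) auto
  moreover have "w * ((a - m) / m) + (1 - w) * ((b - m) / m) = 0"
    using \<open>0 < m\<close> by (simp add: m_def field_simps)
  ultimately have "w * ln a + (1 - w) * ln b < ln m" by (simp add: algebra_simps)
  then have "exp (w * ln a + (1 - w) * ln b) < m"
    using \<open>0 < m\<close> by (metis exp_less_cancel_iff exp_ln)
  then show ?thesis
    using assms by (simp add: powr_def exp_add m_def)
qed

lemma demand_pos: "0 < p \<Longrightarrow> 0 < demand al p"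
  by (simp add: demand_def)

lemma demand_powr_neg: "0 < p \<Longrightarrow> 0 < al \<Longrightarrow> demand al p powr (- al) = p"
  by (simp add: demand_def powr_powr powr_minus_divide powr_divide)

lemma spend_eq_demand_powr:
  assumes "0 < p" "0 < al"
  shows "p * demand al p = demand al p powr (1 - al)"
proof -
  have "demand al p powr (1 + - al) = demand al p powr 1 * demand al p powr (- al)"
    by (rule powr_add)
  then show ?thesis
    using demand_powr_neg[OF assms] demand_pos[OF assms(1), of al] by simp
qed

lemma demand_strict_antimono: "0 < al \<Longrightarrow> 0 < q \<Longrightarrow> q < p \<Longrightarrow> demand al p < demand al q"
  unfolding demand_def by (intro powr_less_mono2) (auto simp: divide_strict_left_mono)

lemma demand_at_clearing_price:
  assumes "0 < al" "0 < C" "0 < N"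
  shows "N * demand al ((N / C) powr al) = C"
proof -
  have "1 / (N / C) powr al = (C / N) powr al"
    using assms by (simp add: powr_divide)
  then show ?thesis
    using assms by (simp add: demand_def powr_powr)
qed

lemma spend_less_tangent:
  assumes "0 < p" "0 < q" "p \<noteq> q" "0 < al" "al < 1"
  shows "p * demand al p < q * (al * demand al q + (1 - al) * demand al p)"
proof -
  define a where "a = demand al q"
  define b where "b = demand al p"
  have "0 < a" "0 < b" using assms by (simp_all add: a_def b_def demand_pos)
  have "a \<noteq> b"
  proof (cases "p < q")
    case True
    then have "a < b" using demand_strict_antimono[OF assms(4,1)] by (simp add: a_def b_def)
    then show ?thesis by simp
  next
    case False
    then have "b < a" using demand_strict_antimono[OF assms(4,2)] assms(3) by (simp add: a_def b_def)
    then show ?thesis by simp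
  qed
  have "a powr (- al) * a powr al = a powr (- al + al)" by (rule powr_add[symmetric])
  then have "q * a powr al = 1"
    using demand_powr_neg[OF assms(2,4)] \<open>0 < a\<close> by (simp add: a_def)
  then have "p * b = q * (a powr al * b powr (1 - al))"
    using spend_eq_demand_powr[OF assms(1,4)] by (simp add: b_def)
  also have "\<dots> < q * (al * a + (1 - al) * b)"
    using weighted_geometric_mean_less[OF \<open>0 < a\<close> \<open>0 < b\<close> \<open>a \<noteq> b\<close> assms(4,5)] assms(2)
    by simp
  finally show ?thesis by (simp add: a_def b_def)
qed

lemma spend_le_tangent:
  assumes "0 < p" "0 < q" "0 < al" "al < 1"
  shows "p * demand al p \<le> q * (al * demand al q + (1 - al) * demand al p)"
proof (cases "p = q")
  case True
  then show ?thesis by (simp add: algebra_simps)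
next
  case False
  then show ?thesis using spend_less_tangent[OF assms(1,2) False assms(3,4)] by simp
qed

lemma welfare_eq_revenue_div:
  assumes "p \<in> pos_prices" "0 < al" "al < 1"
  shows "welfare al R0 lS Nm Nf s p = revenue al R0 lS Nm Nf s p / (1 - al)"
proof -
  obtain pM pS where p: "p = (pM, pS)" by fastforce
  have "0 < pM" "0 < pS" using assms p by (auto simp: pos_prices_def)
  then show ?thesis
    unfolding welfare_def revenue_def util_def Let_def p
    using spend_eq_demand_powr[of pM al, symmetric] spend_eq_demand_powr[of pS al, symmetric] assms(2)
    by (simp add: add_divide_distrib mult_ac)
qed

text \<open>The body of assoc, with the capacities in users (cM, cS) and the tie-break share xS of the
  fixed users abstracted.\<close>
lemma association_formula_bounds:
  fixes cM cS Nm Nf xS KM KS :: real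
  assumes "0 \<le> cM" "0 \<le> cS" "0 < Nm" "0 < Nf" "0 \<le> xS" "xS \<le> Nf"
    and "(case (if c1 then (min (Nf - min Nf cS) (cM - min Nm cM), min Nf cS)
            else if c2 then (min Nf (cM - min Nm cM), min (Nf - min Nf (cM - min Nm cM)) cS)
            else (min (cM - min Nm cM) (Nf - xS + max 0 (xS - cS)),
                  min cS (xS + max 0 (Nf - xS - (cM - min Nm cM)))))
          of (fM, fS) \<Rightarrow> (min Nm cM + fM, fS)) = (KM, KS)"
  shows "0 \<le> KM \<and> KM \<le> cM \<and> 0 \<le> KS \<and> KS \<le> cS \<and> KS \<le> Nf \<and> KM + KS \<le> Nm + Nf"
  using assms by (auto split: if_splits simp: min_def max_def)

lemma assoc_bounds:
  fixes al R0 lS Nm Nf BM BS pM pS KM KS :: real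
  assumes "0 \<le> BM" "0 \<le> BS" "0 < pM" "0 < pS" "0 < R0" "0 < lS" "0 < Nm" "0 < Nf"
    and K: "assoc al R0 lS Nm Nf (BM, BS) (pM, pS) = (KM, KS)"
  shows "0 \<le> KM \<and> 0 \<le> KS \<and> KS \<le> Nf \<and> KM + KS \<le> Nm + Nf \<and>
         KM * demand al pM \<le> BM * R0 \<and> KS * demand al pS \<le> lS * BS * R0"
proof -
  have C: "0 \<le> BM * R0" "0 \<le> lS * BS * R0" using assms by simp_all
  have D: "0 < demand al pM" "0 < demand al pS" using assms demand_pos by auto
  let ?xS = "if lS * BS * R0 + BM * R0 = 0 then 0
             else Nf * (lS * BS * R0) / (lS * BS * R0 + BM * R0)"
  have "0 \<le> ?xS" "?xS \<le> Nf" using C assms(8) by (auto simp: divide_le_eq)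
  then have "0 \<le> KM \<and> KM \<le> BM * R0 / demand al pM \<and> 0 \<le> KS \<and>
      KS \<le> lS * BS * R0 / demand al pS \<and> KS \<le> Nf \<and> KM + KS \<le> Nm + Nf"
    using C D assms(7,8) K unfolding assoc_def Let_def fst_conv snd_conv
    by (intro association_formula_bounds) (auto simp: divide_nonneg_pos)
  then show ?thesis using D by (auto simp: le_divide_eq)
qed

lemma assoc_market_clearing:
  assumes "qS < qM" "0 < qM" "0 < qS"
    and "Nm * demand al qM = BM * R0" "Nf * demand al qS = lS * BS * R0"
  shows "assoc al R0 lS Nm Nf (BM, BS) (qM, qS) = (Nm, Nf)"
proof -
  have "BM * R0 / demand al qM = Nm" "lS * BS * R0 / demand al qS = Nf"
    using assms demand_pos[of qM al] demand_pos[of qS al] by (simp_all add: field_simps)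
  then show ?thesis using assms(1) by (simp add: assoc_def Let_def)
qed

lemma served_value_le:
  fixes KM KS Nm Nf wM wS :: real
  assumes "0 \<le> KM" "KS \<le> Nf" "KM + KS \<le> Nm + Nf" "0 < wM" "wM < wS"
  shows "KM * wM + KS * wS \<le> Nm * wM + Nf * wS"
    and "Nm * wM + Nf * wS \<le> KM * wM + KS * wS \<Longrightarrow> KM = Nm \<and> KS = Nf"
proof -
  have gap: "Nm * wM + Nf * wS - (KM * wM + KS * wS) =
      (Nm + Nf - KM - KS) * wM + (Nf - KS) * (wS - wM)"
    by (simp add: algebra_simps)
  have "0 \<le> (Nm + Nf - KM - KS) * wM" "0 \<le> (Nf - KS) * (wS - wM)"
    using assms by simp_all
  then show "KM * wM + KS * wS \<le> Nm * wM + Nf * wS" using gap by linarith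
  assume "Nm * wM + Nf * wS \<le> KM * wM + KS * wS"
  then have "(Nm + Nf - KM - KS) * wM = 0" "(Nf - KS) * (wS - wM) = 0"
    using gap \<open>0 \<le> (Nm + Nf - KM - KS) * wM\<close> \<open>0 \<le> (Nf - KS) * (wS - wM)\<close> by linarith+
  then show "KM = Nm \<and> KS = Nf" using assms by simp
qed

locale market_clearing_split =
  fixes al R0 lS Nm Nf B BS0 BMs BSs qM qS :: real
  assumes al_pos: "0 < al" and al_less_1: "al < 1" and R0_pos: "0 < R0" and lS_gt_1: "1 < lS"
    and Nm_pos: "0 < Nm" and Nf_pos: "0 < Nf" and BS0_nonneg: "0 \<le> BS0"
    and split_feasible: "0 < BMs" "BS0 \<le> BSs" "BMs + BSs = B"
    and prices_pos: "0 < qM" "0 < qS"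
    and macro_clears: "Nm * demand al qM = BMs * R0"
    and small_clears: "Nf * demand al qS = lS * BSs * R0"
    and price_ratio: "lS * qS \<le> qM"
    and price_ratio_eq: "lS * qS = qM \<or> BSs = BS0"
  \<comment> \<open>bandwidth earns more in macro-cells only when the regulatory minimum binds\<close>
begin

abbreviation "REV \<equiv> revenue al R0 lS Nm Nf"

lemma small_price_less: "qS < qM"
proof -
  have "qS < lS * qS" using lS_gt_1 prices_pos by simp
  then show ?thesis using price_ratio by linarith
qed

lemma revenue_at_clearing:
  "REV (BMs, BSs) (qM, qS) = qM * (BMs * R0) + qS * (lS * BSs * R0)"
  using assoc_market_clearing[OF small_price_less prices_pos macro_clears small_clears]
  by (simp add: revenue_def flip: macro_clears small_clears)

lemma capacity_value_le:
  assumes "0 \<le> BM" "BM + BS \<le> B" "BS0 \<le> BS"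
  shows "qM * (BM * R0) + qS * (lS * BS * R0) \<le> qM * (BMs * R0) + qS * (lS * BSs * R0)"
proof -
  have "(qM - lS * qS) * (BS - BSs) \<ge> 0" using price_ratio price_ratio_eq assms by auto
  moreover have "qM * (BM + BS) \<le> qM * (BMs + BSs)" using assms split_feasible prices_pos by simp
  ultimately have "qM * BM + lS * qS * BS \<le> qM * BMs + lS * qS * BSs" by (simp add: algebra_simps)
  then have "(qM * BM + lS * qS * BS) * R0 \<le> (qM * BMs + lS * qS * BSs) * R0"
    using R0_pos by (intro mult_right_mono) auto
  then show ?thesis by (simp add: algebra_simps)
qed

lemma clearing_spend_less: "qM * demand al qM < qS * demand al qS"
proof -
  have "demand al qM < demand al qS"
    using demand_strict_antimono[OF al_pos prices_pos(2) small_price_less] .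
  then have "demand al qM powr (1 - al) < demand al qS powr (1 - al)"
    using demand_pos[OF prices_pos(1), of al] al_less_1 by (intro powr_less_mono2) auto
  then show ?thesis
    using spend_eq_demand_powr[OF prices_pos(1) al_pos] spend_eq_demand_powr[OF prices_pos(2) al_pos]
    by simp
qed

lemma revenue_le_clearing:
  assumes split: "0 \<le> BM" "BM + BS \<le> B" "BS0 \<le> BS" and prices: "0 < pM" "0 < pS"
  shows "REV (BM, BS) (pM, pS) \<le> REV (BMs, BSs) (qM, qS)"
    and "REV (BMs, BSs) (qM, qS) \<le> REV (BM, BS) (pM, pS) \<Longrightarrow>
         BM = BMs \<and> BS = BSs \<and> market_clearing al R0 lS Nm Nf (BM, BS) (pM, pS)"
proof -
  obtain KM KS where K: "assoc al R0 lS Nm Nf (BM, BS) (pM, pS) = (KM, KS)" by fastforce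
  define dM where "dM = demand al pM"
  define dS where "dS = demand al pS"
  define aM where "aM = demand al qM"
  define aS where "aS = demand al qS"
  have KB: "0 \<le> KM" "0 \<le> KS" "KS \<le> Nf" "KM + KS \<le> Nm + Nf"
      "KM * dM \<le> BM * R0" "KS * dS \<le> lS * BS * R0"
    using assoc_bounds[OF split(1) _ prices R0_pos _ Nm_pos Nf_pos K] split(3) BS0_nonneg lS_gt_1
    by (simp_all add: dM_def dS_def)
  define tM where "tM = qM * (al * aM + (1 - al) * dM) - pM * dM"
  define tS where "tS = qS * (al * aS + (1 - al) * dS) - pS * dS"
  define V where "V = REV (BMs, BSs) (qM, qS)"
  define X where "X = KM * (qM * aM) + KS * (qS * aS)"
  define Y where "Y = qM * (KM * dM) + qS * (KS * dS)"
  define Z where "Z = qM * (BM * R0) + qS * (lS * BS * R0)"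
  have "V = Nm * (qM * aM) + Nf * (qS * aS)" "V = qM * (BMs * R0) + qS * (lS * BSs * R0)"
    using revenue_at_clearing by (simp_all add: V_def aM_def aS_def flip: macro_clears small_clears)
  moreover have "REV (BM, BS) (pM, pS) = KM * (pM * dM) + KS * (pS * dS)"
    by (simp add: revenue_def K dM_def dS_def)
  \<comment> \<open>slacks: unserved users, capacity value below the clearing split, unused capacity, and
    the tangent gaps of the concave spend\<close>
  ultimately have gap: "V - REV (BM, BS) (pM, pS) =
      al * (V - X) + (1 - al) * ((V - Z) + (Z - Y)) + (KM * tM + KS * tS)"
    by (simp add: X_def Y_def Z_def tM_def tS_def algebra_simps)
  have served: "X \<le> V" "V \<le> X \<Longrightarrow> KM = Nm \<and> KS = Nf"
    using served_value_le[OF KB(1,3,4) _ clearing_spend_less] \<open>V = Nm * _ + _\<close>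
      mult_pos_pos[OF prices_pos(1) demand_pos[OF prices_pos(1), of al]]
    by (simp_all add: X_def aM_def aS_def)
  have "Z \<le> V" using capacity_value_le[OF split] \<open>V = qM * _ + _\<close> by (simp add: Z_def)
  have capacity_slack: "Z - Y = qM * (BM * R0 - KM * dM) + qS * (lS * BS * R0 - KS * dS)"
    by (simp add: Y_def Z_def algebra_simps)
  have capacity_slack_nonneg: "0 \<le> qM * (BM * R0 - KM * dM)" "0 \<le> qS * (lS * BS * R0 - KS * dS)"
    using KB prices_pos by simp_all
  then have "Y \<le> Z" using capacity_slack by linarith
  have tangent: "0 \<le> tM" "0 \<le> tS"
    using spend_le_tangent[OF prices(1) prices_pos(1) al_pos al_less_1]
      spend_le_tangent[OF prices(2) prices_pos(2) al_pos al_less_1]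
    by (simp_all add: tM_def tS_def dM_def dS_def aM_def aS_def)
  have slacks: "0 \<le> al * (V - X)" "0 \<le> (1 - al) * ((V - Z) + (Z - Y))"
      "0 \<le> KM * tM" "0 \<le> KS * tS"
    using served(1) \<open>Z \<le> V\<close> \<open>Y \<le> Z\<close> tangent KB al_pos al_less_1 by simp_all
  then show "REV (BM, BS) (pM, pS) \<le> V" using gap by linarith
  assume "V \<le> REV (BM, BS) (pM, pS)"
  then have "al * (V - X) = 0" "(1 - al) * ((V - Z) + (Z - Y)) = 0" "KM * tM = 0" "KS * tS = 0"
    using gap slacks by linarith+
  then have "X = V" "Z = Y" "KM * tM = 0" "KS * tS = 0"
    using al_pos al_less_1 \<open>Z \<le> V\<close> \<open>Y \<le> Z\<close> by auto
  with served(2) have KM: "KM = Nm" and KS: "KS = Nf" and "tM = 0" "tS = 0"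
    using Nm_pos Nf_pos by auto
  have "pM = qM"
    using \<open>tM = 0\<close> spend_less_tangent[OF prices(1) prices_pos(1) _ al_pos al_less_1]
    by (fastforce simp: tM_def dM_def aM_def)
  have "pS = qS"
    using \<open>tS = 0\<close> spend_less_tangent[OF prices(2) prices_pos(2) _ al_pos al_less_1]
    by (fastforce simp: tS_def dS_def aS_def)
  have "qM * (BM * R0 - KM * dM) = 0" "qS * (lS * BS * R0 - KS * dS) = 0"
    using \<open>Z = Y\<close> capacity_slack capacity_slack_nonneg by linarith+
  then have "BM * R0 = Nm * dM" "lS * BS * R0 = Nf * dS" using prices_pos KM KS by simp_all
  then show "BM = BMs \<and> BS = BSs \<and> market_clearing al R0 lS Nm Nf (BM, BS) (pM, pS)"
    using macro_clears small_clears \<open>pM = qM\<close> \<open>pS = qS\<close> R0_pos lS_gt_1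
    by (simp add: market_clearing_def dM_def dS_def)
qed

end

definition unique_optimum :: "(real \<times> real \<Rightarrow> real \<times> real \<Rightarrow> real) \<Rightarrow>
    (real \<times> real \<Rightarrow> real \<times> real \<Rightarrow> bool) \<Rightarrow> real \<Rightarrow> real \<Rightarrow> real \<times> real \<Rightarrow> real \<times> real \<Rightarrow> bool" where
  "unique_optimum F MC B BS0 s0 p0 \<longleftrightarrow> s0 \<in> feasible B BS0 \<and> p0 \<in> pos_prices \<and>
     (\<forall>s\<in>feasible B BS0. \<forall>p\<in>pos_prices. F s p \<le> F s0 p0 \<and> (F s0 p0 \<le> F s p \<longrightarrow> s = s0 \<and> MC s p))"

lemma unique_optimum_opt_alloc:
  assumes "unique_optimum F MC B BS0 s0 p0"
  shows "{s. opt_alloc F B BS0 s} = {s0}"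
    and "\<forall>s. opt_alloc F B BS0 s \<longrightarrow> (\<exists>p. opt_prices F s p) \<and> (\<forall>p. opt_prices F s p \<longrightarrow> MC s p)"
proof -
  have alloc: "opt_alloc F B BS0 s \<longleftrightarrow> s = s0" for s
    using assms unfolding unique_optimum_def opt_alloc_def by (metis order_antisym)
  have prices: "opt_prices F s0 p0" "opt_prices F s0 p \<Longrightarrow> MC s0 p" for p
    using assms unfolding unique_optimum_def opt_prices_def by blast+
  show "{s. opt_alloc F B BS0 s} = {s0}" using alloc by blast
  show "\<forall>s. opt_alloc F B BS0 s \<longrightarrow> (\<exists>p. opt_prices F s p) \<and> (\<forall>p. opt_prices F s p \<longrightarrow> MC s p)"
    using prices alloc by metis
qed

lemma unique_optimum_strict_loss:
  assumes "unique_optimum F MC B 0 s0 p0" "s0 \<notin> feasible B BS0" "0 \<le> BS0"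
  shows "strict_loss F B BS0"
proof -
  have "feasible B BS0 \<subseteq> feasible B 0" using assms(3) by (auto simp: feasible_def)
  then show ?thesis
    using assms(1,2) unfolding unique_optimum_def strict_loss_def by (metis not_le subsetD)
qed

lemma unique_optimum_divide:
  assumes "unique_optimum F MC B BS0 s0 p0" "0 < c"
    and "\<And>s p. p \<in> pos_prices \<Longrightarrow> G s p = F s p / c"
  shows "unique_optimum G MC B BS0 s0 p0"
  using assms unfolding unique_optimum_def by (simp add: divide_le_cancel)

context market_clearing_split
begin

lemma unique_optimum_revenue:
  "unique_optimum REV (market_clearing al R0 lS Nm Nf) B BS0 (BMs, BSs) (qM, qS)"
  using revenue_le_clearing split_feasible prices_pos
  unfolding unique_optimum_def feasible_def pos_prices_def by auto

end

lemma scaled_small_price: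
  fixes al lS C N :: real
  assumes "0 < al" "0 < lS" "0 < C" "0 < N"
  shows "lS * (N / (lS * C)) powr al = (N * lS powr (1 / al - 1) / C) powr al"
proof -
  have "lS = (lS powr (1 / al)) powr al" using assms by (simp add: powr_powr)
  then have "lS * (N / (lS * C)) powr al = (lS powr (1 / al) * (N / (lS * C))) powr al"
    by (metis powr_mult assms(2,3,4) divide_pos_pos mult_pos_pos less_imp_le powr_ge_zero)
  also have "lS powr (1 / al) * (N / (lS * C)) = N * (lS powr (1 / al) / lS powr 1) / C"
    using assms by simp
  finally show ?thesis by (simp add: powr_diff)
qed

lemma threshold_split_unique_optimum:
  fixes al R0 lS Nm Nf B BS0 BMs BSs :: real
  assumes "0 < al" "al < 1" "0 < R0" "1 < lS" "0 < Nm" "0 < Nf" "0 \<le> BS0"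
    and split: "0 < BMs" "0 < BSs" "BS0 \<le> BSs" "BMs + BSs = B"
    and below: "Nf * lS powr (1 / al - 1) * BMs \<le> Nm * BSs"
    and binding: "Nf * lS powr (1 / al - 1) * BMs = Nm * BSs \<or> BSs = BS0"
  shows "\<exists>q. unique_optimum (revenue al R0 lS Nm Nf) (market_clearing al R0 lS Nm Nf) B BS0 (BMs, BSs) q
           \<and> unique_optimum (welfare al R0 lS Nm Nf) (market_clearing al R0 lS Nm Nf) B BS0 (BMs, BSs) q"
proof -
  define th where "th = Nf * lS powr (1 / al - 1)"
  define qM where "qM = (Nm / (BMs * R0)) powr al"
  define qS where "qS = (Nf / (lS * BSs * R0)) powr al"
  have "lS * qS = (th / (BSs * R0)) powr al"
    using scaled_small_price[of al lS "BSs * R0" Nf] assms by (simp add: qS_def th_def mult.assoc)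
  moreover have "th / (BSs * R0) \<le> Nm / (BMs * R0)"
    "th * BMs = Nm * BSs \<Longrightarrow> th / (BSs * R0) = Nm / (BMs * R0)"
    using below assms by (simp_all add: th_def divide_le_eq le_divide_eq field_simps)
  ultimately have "lS * qS \<le> qM" "lS * qS = qM \<or> BSs = BS0"
    using binding assms by (auto simp: qM_def th_def intro!: powr_mono2)
  then interpret market_clearing_split al R0 lS Nm Nf B BS0 BMs BSs qM qS
    using assms demand_at_clearing_price[of al] by unfold_locales (simp_all add: qM_def qS_def mult.assoc)
  have "unique_optimum (welfare al R0 lS Nm Nf) (market_clearing al R0 lS Nm Nf) B BS0 (BMs, BSs) (qM, qS)"
    using welfare_eq_revenue_div assms(1,2)
    by (intro unique_optimum_divide[OF unique_optimum_revenue, where c = "1 - al"]) auto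
  then show ?thesis using unique_optimum_revenue by blast
qed

theorem theorem1:
  fixes al R0 lS Nm Nf B BS0 :: real
  assumes "0 < al" "al < 1" "R0 > 0" "lS > 1" "Nm > 0" "Nf > 0" "B > 0"
    and "0 \<le> BS0" "BS0 < B"
  defines "th \<equiv> Nf * lS powr (1 / al - 1)"
  defines "REV \<equiv> revenue al R0 lS Nm Nf" and "SW \<equiv> welfare al R0 lS Nm Nf"
  shows "(BS0 \<le> th * B / (th + Nm) \<longrightarrow>
            {s. opt_alloc SW B BS0 s} = {(Nm * B / (th + Nm), th * B / (th + Nm))} \<and>
            {s. opt_alloc REV B BS0 s} = {(Nm * B / (th + Nm), th * B / (th + Nm))})
       \<and> (BS0 > th * B / (th + Nm) \<longrightarrow>
            {s. opt_alloc SW B BS0 s} = {(B - BS0, BS0)} \<and>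
            {s. opt_alloc REV B BS0 s} = {(B - BS0, BS0)} \<and>
            strict_loss SW B BS0 \<and> strict_loss REV B BS0)
       \<and> (\<forall>s. opt_alloc SW B BS0 s \<longrightarrow>
            (\<exists>p. opt_prices SW s p) \<and>
            (\<forall>p. opt_prices SW s p \<longrightarrow> market_clearing al R0 lS Nm Nf s p))
       \<and> (\<forall>s. opt_alloc REV B BS0 s \<longrightarrow>
            (\<exists>p. opt_prices REV s p) \<and>
            (\<forall>p. opt_prices REV s p \<longrightarrow> market_clearing al R0 lS Nm Nf s p))"
proof -
  note model = assms(1-6)
  define BMu BSu where "BMu = Nm * B / (th + Nm)" and "BSu = th * B / (th + Nm)"
  have "0 < th" using assms(4,6) by (simp add: th_def)
  moreover have "BMu + BSu = (th + Nm) * B / (th + Nm)"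
    by (simp add: BMu_def BSu_def add_divide_distrib distrib_right)
  ultimately have unconstrained: "0 < BMu" "0 < BSu" "BMu + BSu = B" "th * BMu = Nm * BSu"
    using assms(5,7) by (simp_all add: BMu_def BSu_def)
  have opt_unconstrained: "\<exists>q. unique_optimum REV (market_clearing al R0 lS Nm Nf) B BS0' (BMu, BSu) q
      \<and> unique_optimum SW (market_clearing al R0 lS Nm Nf) B BS0' (BMu, BSu) q"
    if "0 \<le> BS0'" "BS0' \<le> BSu" for BS0'
    using threshold_split_unique_optimum[OF model that(1) unconstrained(1,2) that(2) unconstrained(3)]
      unconstrained(4) by (simp add: REV_def SW_def th_def)
  show ?thesis
  proof (cases "BS0 \<le> BSu")
    case True
    with opt_unconstrained assms(8) show ?thesis
      by (metis BMu_def BSu_def unique_optimum_opt_alloc not_le)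
  next
    case False
    then have "th * B / (th + Nm) < BS0" by (simp add: BSu_def)
    then have "th * B < BS0 * (th + Nm)"
      using \<open>0 < th\<close> assms(5) by (simp add: divide_less_eq)
    then have "th * (B - BS0) \<le> Nm * BS0" by (simp add: algebra_simps)
    then obtain q where "unique_optimum REV (market_clearing al R0 lS Nm Nf) B BS0 (B - BS0, BS0) q"
      "unique_optimum SW (market_clearing al R0 lS Nm Nf) B BS0 (B - BS0, BS0) q"
      using threshold_split_unique_optimum[OF model assms(8), where BMs = "B - BS0" and BSs = BS0]
        assms(9) False unconstrained(2) by (auto simp: REV_def SW_def th_def)
    moreover obtain q' where "unique_optimum REV (market_clearing al R0 lS Nm Nf) B 0 (BMu, BSu) q'"
      "unique_optimum SW (market_clearing al R0 lS Nm Nf) B 0 (BMu, BSu) q'"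
      using opt_unconstrained[of 0] unconstrained by auto
    moreover have "(BMu, BSu) \<notin> feasible B BS0" using False by (simp add: feasible_def)
    ultimately show ?thesis
      using False assms(8) unique_optimum_opt_alloc unique_optimum_strict_loss
      by (simp add: BSu_def) blast
  qed
qed

end
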